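(* Let $n\ge3$. For $k=0$ and every $0$-jet $j^0\Gamma\in\mathcal{F}_0$, the stabilizer subalgebra of $j^0\Gamma$ in $\mathfrak{k}_0$ projects isomorphically onto the space of linear vector fields $V_1$ (i.e. $V_1$ is arbitrary and $V_2$ is uniquely determined by $V_1$), so it has dimension $n^2$. For every $k\ge1$, there is an open dense subset of $\mathcal{F}_k$ such that for every $j^k\Gamma$ in it the stabilizer subalgebra of $j^k\Gamma$ in $\mathfrak{k}_k$ is $\{0\}$.
   Context: A symmetric connection near $0\in\mathbb{R}^n$ is given by smooth Christoffel symbols $\Gamma^l_{ij}=\Gamma^l_{ji}$. $\mathcal{F}_k$ denotes the (finite-dimensional) vector space of $k$-jets at $0$ of such connections, i.e. of degree-$\le k$ Taylor polynomials of the $\Gamma^l_{ij}$ at $0$. The group $G=\mathrm{Diff}(\mathbb{R}^n,0)$ of germs of origin-preserving diffeomorphisms acts on connections by $(\varphi^*\nabla)_XY=(\varphi_* )^{-1}(\nabla_{\varphi_*X}\varphi_*Y)$, hence on $\mathcal{F}_k$; this action factors through the finite-dimensional Lie group $K_k=G/G_{k+3}$, where $G_m=\{\varphi\in G:\varphi(x)=x+O(|x|^m)\}$. The Lie algebra $\mathfrak{k}_k$ of $K_k$ is identified with polynomial vector fields $V=V_1+V_2+\dots+V_{k+2}$ with $V_m$ having homogeneous components of degree $m$ (so $V(0)=0$); it acts on $\mathcal{F}_k$ by $j^k\Gamma\mapsto j^k(\mathcal{L}_V\Gamma)$, where $(\mathcal{L}_V\Gamma)^l_{ij}=V^k\partial_k\Gamma^l_{ij}-\Gamma^k_{ij}\partial_kV^l+\Gamma^l_{kj}\partial_iV^k+\Gamma^l_{ik}\partial_jV^k+\partial_i\partial_jV^l$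 (this is well defined on $k$-jets since $V(0)=0$). The stabilizer subalgebra of $j^k\Gamma$ is $\{V\in\mathfrak{k}_k: j^k(\mathcal{L}_V\Gamma)=0\}$. *)

theory Defs
  imports "HOL-Analysis.Analysis" "HOL-Library.Function_Algebras"
begin

text \<open>Polynomials in the variables x_0,...,x_{n-1} are represented by their coefficient
functions on multi-indices (functions nat => nat, vanishing at indices >= n).\<close>

type_synonym mindex = "nat \<Rightarrow> nat"
type_synonym rpoly = "mindex \<Rightarrow> real"

definition MI :: "nat \<Rightarrow> mindex set" where
  "MI n = {\<alpha>. \<forall>i\<ge>n. \<alpha> i = 0}"

definition mdeg :: "nat \<Rightarrow> mindex \<Rightarrow> nat" where
  "mdeg n \<alpha> = (\<Sum>i<n. \<alpha> i)"

definition mis :: "nat \<Rightarrow> nat \<Rightarrow> mindex set" where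
  "mis n d = {\<alpha>. \<alpha> \<in> MI n \<and> mdeg n \<alpha> \<le> d}"

definition polys :: "nat \<Rightarrow> nat \<Rightarrow> rpoly set" where
  "polys n d = {p. \<forall>\<alpha>. p \<alpha> \<noteq> 0 \<longrightarrow> \<alpha> \<in> mis n d}"

definition pdiff :: "nat \<Rightarrow> rpoly \<Rightarrow> rpoly" where
  "pdiff i p = (\<lambda>\<alpha>. real (\<alpha> i + 1) * p (\<alpha>(i := \<alpha> i + 1)))"

definition pmult :: "rpoly \<Rightarrow> rpoly \<Rightarrow> rpoly" where
  "pmult p q = (\<lambda>\<alpha>. \<Sum>\<beta>\<in>{\<beta>. \<forall>i. \<beta> i \<le> \<alpha> i}. p \<beta> * q (\<lambda>i. \<alpha> i - \<beta> i))"

definition trunc :: "nat \<Rightarrow> nat \<Rightarrow> rpoly \<Rightarrow> rpoly" where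
  "trunc n k p = (\<lambda>\<alpha>. if mdeg n \<alpha> \<le> k then p \<alpha> else 0)"

definition hcomp :: "nat \<Rightarrow> nat \<Rightarrow> rpoly \<Rightarrow> rpoly" where
  "hcomp n m p = (\<lambda>\<alpha>. if mdeg n \<alpha> = m then p \<alpha> else 0)"

text \<open>The space F_k of k-jets of symmetric connections: Christoffel symbols Gamma l i j
(upper index l, lower indices i j), polynomials of degree \<le> k, symmetric in i j,
and zero for indices outside {0..<n}.\<close>
definition Fjets :: "nat \<Rightarrow> nat \<Rightarrow> (nat \<Rightarrow> nat \<Rightarrow> nat \<Rightarrow> rpoly) set" where
  "Fjets n k = {\<Gamma>. (\<forall>l i j. \<Gamma> l i j \<in> polys n k)
      \<and> (\<forall>l i j. \<Gamma> l i j = \<Gamma> l j i)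
      \<and> (\<forall>l i j. (n \<le> l \<or> n \<le> i \<or> n \<le> j) \<longrightarrow> \<Gamma> l i j = (\<lambda>_. 0))}"

definition kalg :: "nat \<Rightarrow> nat \<Rightarrow> (nat \<Rightarrow> rpoly) set" where
  "kalg n k = {V. (\<forall>l. V l \<in> polys n (k + 2)) \<and> (\<forall>l. V l (\<lambda>_. 0) = 0)
      \<and> (\<forall>l\<ge>n. V l = (\<lambda>_. 0))}"

definition linvf :: "nat \<Rightarrow> (nat \<Rightarrow> rpoly) set" where
  "linvf n = {W. (\<forall>l. \<forall>\<alpha>. W l \<alpha> \<noteq> 0 \<longrightarrow> \<alpha> \<in> MI n \<and> mdeg n \<alpha> = 1)
      \<and> (\<forall>l\<ge>n. W l = (\<lambda>_. 0))}"

definition lie :: "nat \<Rightarrow> (nat \<Rightarrow> rpoly) \<Rightarrow> (nat \<Rightarrow> nat \<Rightarrow> nat \<Rightarrow> rpoly)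
    \<Rightarrow> nat \<Rightarrow> nat \<Rightarrow> nat \<Rightarrow> rpoly" where
  "lie n V \<Gamma> l i j = (\<lambda>\<alpha>.
       (\<Sum>m<n. pmult (V m) (pdiff m (\<Gamma> l i j)) \<alpha>)
     - (\<Sum>m<n. pmult (\<Gamma> m i j) (pdiff m (V l)) \<alpha>)
     + (\<Sum>m<n. pmult (\<Gamma> l m j) (pdiff i (V m)) \<alpha>)
     + (\<Sum>m<n. pmult (\<Gamma> l i m) (pdiff j (V m)) \<alpha>)
     + pdiff i (pdiff j (V l)) \<alpha>)"

definition stab :: "nat \<Rightarrow> nat \<Rightarrow> (nat \<Rightarrow> nat \<Rightarrow> nat \<Rightarrow> rpoly) \<Rightarrow> (nat \<Rightarrow> rpoly) set" where
  "stab n k \<Gamma> = {V \<in> kalg n k. \<forall>l<n. \<forall>i<n. \<forall>j<n. trunc n k (lie n V \<Gamma> l i j) = (\<lambda>_. 0)}"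

definition vscale :: "real \<Rightarrow> (nat \<Rightarrow> rpoly) \<Rightarrow> (nat \<Rightarrow> rpoly)" where
  "vscale c V = (\<lambda>l \<alpha>. c * V l \<alpha>)"

definition jdist :: "nat \<Rightarrow> nat \<Rightarrow> (nat \<Rightarrow> nat \<Rightarrow> nat \<Rightarrow> rpoly) \<Rightarrow> (nat \<Rightarrow> nat \<Rightarrow> nat \<Rightarrow> rpoly) \<Rightarrow> real" where
  "jdist n k \<Gamma> \<Gamma>' = (\<Sum>l<n. \<Sum>i<n. \<Sum>j<n. \<Sum>\<alpha>\<in>mis n k. \<bar>\<Gamma> l i j \<alpha> - \<Gamma>' l i j \<alpha>\<bar>)"

definition open_in_F :: "nat \<Rightarrow> nat \<Rightarrow> (nat \<Rightarrow> nat \<Rightarrow> nat \<Rightarrow> rpoly) set \<Rightarrow> bool" where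
  "open_in_F n k U \<longleftrightarrow> U \<subseteq> Fjets n k \<and>
     (\<forall>\<Gamma>\<in>U. \<exists>e>0. \<forall>\<Gamma>'\<in>Fjets n k. jdist n k \<Gamma> \<Gamma>' < e \<longrightarrow> \<Gamma>' \<in> U)"

definition dense_in_F :: "nat \<Rightarrow> nat \<Rightarrow> (nat \<Rightarrow> nat \<Rightarrow> nat \<Rightarrow> rpoly) set \<Rightarrow> bool" where
  "dense_in_F n k U \<longleftrightarrow>
     (\<forall>\<Gamma>\<in>Fjets n k. \<forall>e>0. \<exists>\<Gamma>'\<in>U. jdist n k \<Gamma> \<Gamma>' < e)"

end

theory Submission
  imports Defs "Jordan_Normal_Form.Determinant" "HOL-Computational_Algebra.Polynomial"
begin

text \<open>Let \<open>a\<close> be the linear part of a vector field \<open>V\<close> in the stabilizer. The degree-0 part of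
  \<open>\<L>\<^sub>V \<Gamma> = 0\<close> fixes the second derivatives of \<open>V\<close> at 0 in terms of \<open>a\<close> and \<open>\<Gamma>(0)\<close>. For
  \<open>k = 0\<close> nothing else is imposed, so \<open>V\<close> is \<open>a\<close> plus the matching quadratic field and
  \<open>V \<mapsto> a\<close> is an isomorphism onto the linear fields.

  For \<open>k \<ge> 1\<close> the degree-1 part fixes the third derivatives of \<open>V\<close> at 0, and their symmetry
  is a linear system in \<open>a\<close>. Once \<open>a = 0\<close>, the degree-\<open>d\<close> part of the equation is just
  \<open>\<partial>\<^sub>i\<partial>\<^sub>j V\<close> in degree \<open>d\<close>, so \<open>V = 0\<close> by induction on the degree. Hence the
  stabilizer is trivial wherever the Gram determinant of the system is nonzero. This condition
  is open; it holds for the connection with \<open>\<Gamma>\<^sup>l\<^sub>\<sigma>\<^sub>l\<^sub>\<sigma>\<^sub>l = x\<^sub>l\<close>, \<open>\<sigma>\<close> the cyclic shift,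
  which is where \<open>n \<ge> 3\<close> is needed; and the Gram determinant of \<open>\<Gamma> + s \<Gamma>\<^sub>\<sigma>\<close> is
  a power of \<open>s\<close> times a polynomial in \<open>1/s\<close> that does not vanish at 0, so it is nonzero
  for arbitrarily small \<open>s > 0\<close>: the condition is dense.\<close>

subsection \<open>Multi-indices\<close>

abbreviation mzero :: mindex where
  "mzero \<equiv> (\<lambda>_. 0)"

definition munit :: "nat \<Rightarrow> mindex" where
  "munit q = (\<lambda>t. if t = q then 1 else 0)"

abbreviation lin_coeffs :: "(nat \<Rightarrow> rpoly) \<Rightarrow> nat \<Rightarrow> nat \<Rightarrow> real" where
  "lin_coeffs V \<equiv> (\<lambda>p q. V p (munit q))"

lemma munit_same [simp]: "munit q q = 1"
  and munit_other [simp]: "t \<noteq> q \<Longrightarrow> munit q t = 0"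
  by (simp_all add: munit_def)

lemma munit_neq_mzero [simp]: "munit q \<noteq> mzero" "mzero \<noteq> munit q"
  by (metis munit_same zero_neq_one)+

lemma munit_eq_iff [simp]: "munit p = munit q \<longleftrightarrow> p = q"
  by (metis munit_same munit_other zero_neq_one)

lemma mzero_upd_1: "mzero(i := 1) = munit i" "mzero(i := Suc 0) = munit i"
  by (auto simp: munit_def)

lemma munit_MI [simp]: "q < n \<Longrightarrow> munit q \<in> MI n"
  by (simp add: MI_def munit_def)

lemma mdeg_munit [simp]: "q < n \<Longrightarrow> mdeg n (munit q) = 1"
  by (simp add: mdeg_def munit_def)

lemma mdeg_mzero [simp]: "mdeg n mzero = 0"
  by (simp add: mdeg_def)

lemma mdeg_ge_component: "i < n \<Longrightarrow> \<alpha> i \<le> mdeg n \<alpha>"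
  unfolding mdeg_def by (rule member_le_sum) auto

lemma mdeg_mono: "\<forall>t. \<beta> t \<le> \<alpha> t \<Longrightarrow> mdeg n \<beta> \<le> mdeg n \<alpha>"
  unfolding mdeg_def by (rule sum_mono) auto

lemma mdeg_diff_le: "mdeg n (\<lambda>t. \<alpha> t - \<beta> t) \<le> mdeg n \<alpha>"
  by (rule mdeg_mono) simp

lemma mdeg_upd: assumes "i < n" shows "mdeg n (\<gamma>(i := x)) + \<gamma> i = mdeg n \<gamma> + x"
proof -
  have "(\<Sum>t\<in>{..<n}-{i}. (\<gamma>(i := x)) t) = (\<Sum>t\<in>{..<n}-{i}. \<gamma> t)"
    by (rule sum.cong) auto
  then have "mdeg n (\<gamma>(i := x)) = x + (\<Sum>t\<in>{..<n}-{i}. \<gamma> t)"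
    unfolding mdeg_def using assms by (simp add: sum.remove[of _ i])
  moreover have "mdeg n \<gamma> = \<gamma> i + (\<Sum>t\<in>{..<n}-{i}. \<gamma> t)"
    unfolding mdeg_def using assms by (simp add: sum.remove[of _ i])
  ultimately show ?thesis by simp
qed

lemma mdeg_incr: "i < n \<Longrightarrow> mdeg n (\<gamma>(i := \<gamma> i + 1)) = mdeg n \<gamma> + 1"
  using mdeg_upd[of i n \<gamma> "\<gamma> i + 1"] by simp

lemma MI_upd: "i < n \<Longrightarrow> \<gamma>(i := x) \<in> MI n \<longleftrightarrow> \<gamma> \<in> MI n"
  by (auto simp: MI_def)

lemma MI_mdeg_eq_0: assumes "\<alpha> \<in> MI n" "mdeg n \<alpha> = 0" shows "\<alpha> = mzero"
proof
  fix i show "\<alpha> i = 0"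
    using assms mdeg_ge_component[of i n \<alpha>] by (cases "i < n") (auto simp: MI_def)
qed

lemma MI_mdeg_Suc_decomp:
  assumes "\<beta> \<in> MI n" "mdeg n \<beta> = Suc d"
  obtains \<gamma> i where "\<gamma> \<in> MI n" "mdeg n \<gamma> = d" "i < n" "\<beta> = \<gamma>(i := \<gamma> i + 1)"
proof -
  obtain i where i: "i < n" "\<beta> i \<noteq> 0"
    using assms(2) unfolding mdeg_def by (metis sum.neutral lessThan_iff nat.distinct(1))
  define \<gamma> where "\<gamma> = \<beta>(i := \<beta> i - 1)"
  have \<beta>: "\<beta> = \<gamma>(i := \<gamma> i + 1)" using i by (auto simp: \<gamma>_def fun_eq_iff)
  have "\<gamma> \<in> MI n" using assms(1) MI_upd[OF i(1)] by (simp add: \<gamma>_def)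
  moreover have "mdeg n \<gamma> = d" using mdeg_incr[OF i(1), of \<gamma>] \<beta> assms(2) by simp
  ultimately show ?thesis using that i(1) \<beta> by blast
qed

lemma MI_mdeg_add2_decomp:
  assumes "\<beta> \<in> MI n" "mdeg n \<beta> = d + 2"
  obtains \<alpha> i j where "\<alpha> \<in> MI n" "mdeg n \<alpha> = d" "i < n" "j < n"
    "\<beta> = (\<alpha>(i := \<alpha> i + 1))(j := (\<alpha>(i := \<alpha> i + 1)) j + 1)"
proof -
  obtain \<gamma> j where "\<gamma> \<in> MI n" "mdeg n \<gamma> = Suc d" "j < n" "\<beta> = \<gamma>(j := \<gamma> j + 1)"
    using MI_mdeg_Suc_decomp[of \<beta> n "Suc d"] assms by auto
  moreover obtain \<alpha> i where "\<alpha> \<in> MI n" "mdeg n \<alpha> = d" "i < n" "\<gamma> = \<alpha>(i := \<alpha> i + 1)"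
    using MI_mdeg_Suc_decomp[OF \<open>\<gamma> \<in> MI n\<close> \<open>mdeg n \<gamma> = Suc d\<close>] by blast
  ultimately show ?thesis using that by blast
qed

lemma MI_mdeg_eq_1: assumes "\<beta> \<in> MI n" "mdeg n \<beta> = 1" shows "\<exists>q<n. \<beta> = munit q"
proof -
  obtain \<gamma> i where "\<gamma> \<in> MI n" "mdeg n \<gamma> = 0" "i < n" "\<beta> = \<gamma>(i := \<gamma> i + 1)"
    using MI_mdeg_Suc_decomp[of \<beta> n 0] assms by auto
  then show ?thesis using MI_mdeg_eq_0 mzero_upd_1 by auto
qed

lemma finite_mis: "finite (mis n d)"
proof -
  have "finite {f :: mindex. \<forall>x. (x \<in> {..<n} \<longrightarrow> f x \<in> {..d}) \<and> (x \<notin> {..<n} \<longrightarrow> f x = 0)}"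
    by (rule finite_set_of_finite_funs) auto
  moreover have "mis n d \<subseteq> {f. \<forall>x. (x \<in> {..<n} \<longrightarrow> f x \<in> {..d}) \<and> (x \<notin> {..<n} \<longrightarrow> f x = 0)}"
    by (auto simp: mis_def MI_def intro: le_trans[OF mdeg_ge_component])
  ultimately show ?thesis by (rule finite_subset[rotated])
qed

lemma pmult_mzero: "pmult p q mzero = p mzero * q mzero"
proof -
  have "{\<beta>. \<forall>i. \<beta> i \<le> 0} = {mzero}" by auto
  then show ?thesis by (simp add: pmult_def)
qed

lemma pmult_munit: "pmult p q (munit m) = p mzero * q (munit m) + p (munit m) * q mzero"
proof -
  have "{\<beta>. \<forall>i. \<beta> i \<le> munit m i} = {mzero, munit m}"
    unfolding set_eq_iff
  proof (intro allI iffI)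
    fix \<beta> :: mindex assume "\<beta> \<in> {\<beta>. \<forall>i. \<beta> i \<le> munit m i}"
    then have le: "\<beta> t \<le> munit m t" for t by simp
    have "\<beta> t = (if \<beta> m = 0 then 0 else munit m t)" for t
      using le[of t] le[of m] by (cases "t = m") auto
    then show "\<beta> \<in> {mzero, munit m}" by (cases "\<beta> m = 0") auto
  qed (auto simp: munit_def)
  moreover have "(\<lambda>i. munit m i - munit m i) = mzero" by simp
  ultimately show ?thesis by (simp add: pmult_def)
qed

lemma pdiff_mzero: "pdiff i p mzero = p (munit i)"
  by (simp add: pdiff_def mzero_upd_1)

lemma pdiff_pdiff: "pdiff i (pdiff j p) \<alpha> = real (\<alpha> i + 1) * real ((\<alpha>(i := \<alpha> i + 1)) j + 1)
   * p ((\<alpha>(i := \<alpha> i + 1))(j := (\<alpha>(i := \<alpha> i + 1)) j + 1))"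
  by (simp add: pdiff_def)

lemma pdiff_commute: "pdiff a (pdiff b p) = pdiff b (pdiff a p)"
  by (cases "a = b") (auto simp: fun_eq_iff pdiff_pdiff fun_upd_twist)

subsection \<open>The Lie derivative in low degrees\<close>

definition poly_in_vars :: "nat \<Rightarrow> rpoly \<Rightarrow> bool" where
  "poly_in_vars n p \<longleftrightarrow> (\<forall>\<beta>. p \<beta> \<noteq> 0 \<longrightarrow> \<beta> \<in> MI n)"

lemma polys_in_vars: "p \<in> polys n d \<Longrightarrow> poly_in_vars n p"
  by (auto simp: polys_def poly_in_vars_def mis_def)

lemma pdiff_in_vars: "m < n \<Longrightarrow> poly_in_vars n p \<Longrightarrow> poly_in_vars n (pdiff m p)"
  unfolding poly_in_vars_def pdiff_def by (metis MI_upd mult_zero_right)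

lemma pmult_outside_MI:
  assumes "poly_in_vars n p" "poly_in_vars n q" "\<alpha> \<notin> MI n"
  shows "pmult p q \<alpha> = 0"
proof -
  obtain t where t: "t \<ge> n" "\<alpha> t \<noteq> 0" using assms(3) by (auto simp: MI_def)
  have "p \<beta> * q (\<lambda>i. \<alpha> i - \<beta> i) = 0" for \<beta>
  proof (cases "\<beta> \<in> MI n")
    case True
    then have "(\<lambda>i. \<alpha> i - \<beta> i) \<notin> MI n" using t by (auto simp: MI_def)
    then show ?thesis using assms(2) by (auto simp: poly_in_vars_def)
  next
    case False
    then show ?thesis using assms(1) by (auto simp: poly_in_vars_def)
  qed
  then show ?thesis unfolding pmult_def by (intro sum.neutral ballI) blast
qed

lemma lie_outside_MI:
  assumes "\<forall>m. poly_in_vars n (V m)" "\<forall>l i j. poly_in_vars n (\<Gamma> l i j)"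
    and "i < n" "j < n" "\<alpha> \<notin> MI n"
  shows "lie n V \<Gamma> l i j \<alpha> = 0"
proof -
  have "poly_in_vars n (pdiff i (pdiff j (V l)))" using pdiff_in_vars assms(1,3,4) by blast
  then have "pdiff i (pdiff j (V l)) \<alpha> = 0" using assms(5) by (auto simp: poly_in_vars_def)
  then show ?thesis
    unfolding lie_def using pmult_outside_MI[OF _ _ assms(5)] pdiff_in_vars assms by simp
qed

lemma lie_mzero:
  assumes "\<forall>m. V m mzero = 0"
  shows "lie n V \<Gamma> l i j mzero =
      - (\<Sum>m<n. \<Gamma> m i j mzero * V l (munit m)) + (\<Sum>m<n. \<Gamma> l m j mzero * V m (munit i))
      + (\<Sum>m<n. \<Gamma> l i m mzero * V m (munit j)) + pdiff i (pdiff j (V l)) mzero"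
  unfolding lie_def by (simp add: pmult_mzero pdiff_mzero assms sum_negf)

lemma lie_munit:
  assumes "\<forall>m. V m mzero = 0"
  shows "lie n V \<Gamma> l i j (munit q) = (\<Sum>m<n. V m (munit q) * \<Gamma> l i j (munit m))
    - (\<Sum>m<n. \<Gamma> m i j mzero * pdiff q (pdiff m (V l)) mzero + \<Gamma> m i j (munit q) * V l (munit m))
    + (\<Sum>m<n. \<Gamma> l m j mzero * pdiff q (pdiff i (V m)) mzero + \<Gamma> l m j (munit q) * V m (munit i))
    + (\<Sum>m<n. \<Gamma> l i m mzero * pdiff q (pdiff j (V m)) mzero + \<Gamma> l i m (munit q) * V m (munit j))
    + pdiff q (pdiff i (pdiff j (V l))) mzero"
  unfolding lie_def by (simp add: pmult_munit pdiff_mzero assms)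

lemma lie_high_order:
  assumes "i < n" "j < n"
    and vanish: "\<forall>m \<beta>. mdeg n \<beta> \<le> mdeg n \<alpha> + 1 \<longrightarrow> V m \<beta> = 0"
  shows "lie n V \<Gamma> l i j \<alpha> = pdiff i (pdiff j (V l)) \<alpha>"
proof -
  have field: "pmult (V m) p \<alpha> = 0" for m p
  proof -
    have "V m \<beta> * p (\<lambda>t. \<alpha> t - \<beta> t) = 0" if "\<forall>t. \<beta> t \<le> \<alpha> t" for \<beta>
      using that vanish mdeg_mono[of \<beta> \<alpha> n] by auto
    then show ?thesis unfolding pmult_def by (simp add: sum.neutral)
  qed
  have derivative: "pmult p (pdiff m (V l')) \<alpha> = 0" if "m < n" for m p l'
  proof -
    have "pdiff m (V l') \<gamma> = 0" if "mdeg n \<gamma> \<le> mdeg n \<alpha>" for \<gamma>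
      using vanish mdeg_incr[OF \<open>m < n\<close>, of \<gamma>] that unfolding pdiff_def by auto
    then have "p \<beta> * pdiff m (V l') (\<lambda>t. \<alpha> t - \<beta> t) = 0" for \<beta>
      using mdeg_diff_le[of n \<alpha> \<beta>] by auto
    then show ?thesis unfolding pmult_def by (intro sum.neutral ballI) blast
  qed
  show ?thesis unfolding lie_def using field derivative assms(1,2) by simp
qed

subsection \<open>Linear parts determine stabilizer elements\<close>

lemma pmult_lincomb_left:
  "pmult (\<lambda>\<alpha>. c * p \<alpha> + d * q \<alpha>) r \<beta> = c * pmult p r \<beta> + d * pmult q r \<beta>"
  unfolding pmult_def by (simp add: sum.distrib sum_distrib_left algebra_simps)

lemma pmult_lincomb_right:
  "pmult r (\<lambda>\<alpha>. c * p \<alpha> + d * q \<alpha>) \<beta> = c * pmult r p \<beta> + d * pmult r q \<beta>"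
  unfolding pmult_def by (simp add: sum.distrib sum_distrib_left algebra_simps)

lemma pdiff_lincomb:
  "pdiff m (\<lambda>\<alpha>. c * p \<alpha> + d * q \<alpha>) = (\<lambda>\<alpha>. c * pdiff m p \<alpha> + d * pdiff m q \<alpha>)"
  unfolding pdiff_def by (simp add: fun_eq_iff algebra_simps)

lemma lie_lincomb:
  "lie n (\<lambda>l \<alpha>. c * V l \<alpha> + d * W l \<alpha>) \<Gamma> l i j \<alpha> = c * lie n V \<Gamma> l i j \<alpha> + d * lie n W \<Gamma> l i j \<alpha>"
  unfolding lie_def pdiff_lincomb pmult_lincomb_left pmult_lincomb_right
  by (simp add: sum.distrib sum_distrib_left algebra_simps)

lemma kalgD:
  assumes "V \<in> kalg n k"
  shows "poly_in_vars n (V m)" "V m \<beta> \<noteq> 0 \<Longrightarrow> \<beta> \<in> MI n \<and> mdeg n \<beta> \<le> k + 2"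
    "V m mzero = 0" "n \<le> m \<Longrightarrow> V m = (\<lambda>_. 0)"
  using assms by (auto simp: kalg_def polys_def mis_def poly_in_vars_def)

lemma kalg_lincomb:
  "V \<in> kalg n k \<Longrightarrow> W \<in> kalg n k \<Longrightarrow> (\<lambda>l \<alpha>. c * V l \<alpha> + d * W l \<alpha>) \<in> kalg n k"
  unfolding kalg_def polys_def by (auto simp: fun_eq_iff) (metis add.right_neutral mult_zero_right)

lemma stab_kalg: "V \<in> stab n k \<Gamma> \<Longrightarrow> V \<in> kalg n k"
  by (simp add: stab_def)

lemma stab_lie_eq_0:
  assumes "V \<in> stab n k \<Gamma>" "l < n" "i < n" "j < n" "mdeg n \<alpha> \<le> k"
  shows "lie n V \<Gamma> l i j \<alpha> = 0"
proof -
  have "trunc n k (lie n V \<Gamma> l i j) = (\<lambda>_. 0)" using assms by (simp add: stab_def)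
  from fun_cong[OF this, of \<alpha>] show ?thesis using assms(5) by (simp add: trunc_def)
qed

lemma stab_lincomb:
  assumes "V \<in> stab n k \<Gamma>" "W \<in> stab n k \<Gamma>"
  shows "(\<lambda>l \<alpha>. c * V l \<alpha> + d * W l \<alpha>) \<in> stab n k \<Gamma>"
  using assms kalg_lincomb[OF stab_kalg stab_kalg] stab_lie_eq_0[OF assms(1)] stab_lie_eq_0[OF assms(2)]
  by (auto simp: stab_def trunc_def lie_lincomb fun_eq_iff)

lemma zero_in_stab: "(\<lambda>_ _. 0) \<in> stab n k \<Gamma>"
proof -
  have "lie n (\<lambda>_ _. 0) \<Gamma> l i j \<alpha> = 0" for l i j \<alpha>
    using lie_lincomb[of n 0 "\<lambda>_ _. 0" 0 "\<lambda>_ _. 0" \<Gamma> l i j \<alpha>] by simp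
  then show ?thesis by (simp add: stab_def kalg_def polys_def trunc_def fun_eq_iff)
qed

lemma kalg_low_degree_eq_0:
  assumes V: "V \<in> kalg n k" and lin: "\<forall>p<n. \<forall>q<n. V p (munit q) = 0" and "mdeg n \<beta> \<le> 1"
  shows "V m \<beta> = 0"
proof (rule ccontr)
  assume nz: "V m \<beta> \<noteq> 0"
  then have "\<beta> \<in> MI n" using kalgD(2)[OF V] by blast
  have "m < n" using nz kalgD(4)[OF V, of m] by (cases "m < n") auto
  have "\<beta> \<noteq> mzero" using nz kalgD(3)[OF V] by auto
  then have "mdeg n \<beta> = 1" using MI_mdeg_eq_0[OF \<open>\<beta> \<in> MI n\<close>] assms(3) by linarith
  then obtain q where "q < n" "\<beta> = munit q" using MI_mdeg_eq_1[OF \<open>\<beta> \<in> MI n\<close>] by blast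
  then show False using nz lin \<open>m < n\<close> by simp
qed

lemma stab_coeff_eq_0_next_degree:
  assumes V: "V \<in> stab n k \<Gamma>" and "d \<le> k"
    and low: "\<forall>m \<beta>. mdeg n \<beta> \<le> d + 1 \<longrightarrow> V m \<beta> = 0" and "mdeg n \<beta> \<le> d + 2"
  shows "V m \<beta> = 0"
proof (rule ccontr)
  note kf = kalgD[OF stab_kalg[OF V]]
  assume nz: "V m \<beta> \<noteq> 0"
  then have "\<beta> \<in> MI n" using kf(2) by blast
  have "m < n" using nz kf(4)[of m] by (cases "m < n") auto
  have "\<not> mdeg n \<beta> \<le> d + 1" using low nz by blast
  then have "mdeg n \<beta> = d + 2" using \<open>mdeg n \<beta> \<le> d + 2\<close> by simp
  then obtain \<alpha> i j where "\<alpha> \<in> MI n" and \<alpha>: "mdeg n \<alpha> = d" "i < n" "j < n"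
      "\<beta> = (\<alpha>(i := \<alpha> i + 1))(j := (\<alpha>(i := \<alpha> i + 1)) j + 1)"
    by (rule MI_mdeg_add2_decomp[OF \<open>\<beta> \<in> MI n\<close>])
  have "pdiff i (pdiff j (V m)) \<alpha> = lie n V \<Gamma> m i j \<alpha>"
    using lie_high_order[of i n j \<alpha> V] \<alpha> low by simp
  also have "\<dots> = 0" using stab_lie_eq_0[OF V] \<open>m < n\<close> \<alpha> \<open>d \<le> k\<close> by simp
  finally show False using nz unfolding pdiff_pdiff \<alpha>(4) by simp
qed

lemma stab_eq_0_if_lin_coeffs_eq_0:
  assumes V: "V \<in> stab n k \<Gamma>" and lin: "\<forall>p<n. \<forall>q<n. V p (munit q) = 0"
  shows "V = (\<lambda>_ _. 0)"
proof -
  have low: "\<forall>m \<beta>. mdeg n \<beta> \<le> d + 1 \<longrightarrow> V m \<beta> = 0" if "d \<le> k + 1" for d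
    using that
  proof (induction d)
    case 0
    show ?case using kalg_low_degree_eq_0[OF stab_kalg[OF V] lin] by simp
  next
    case (Suc d)
    then have "d \<le> k" and low: "\<forall>m \<beta>. mdeg n \<beta> \<le> d + 1 \<longrightarrow> V m \<beta> = 0" by auto
    then show ?case by (intro allI impI stab_coeff_eq_0_next_degree[OF V \<open>d \<le> k\<close> low]) simp
  qed
  show ?thesis
  proof (intro ext)
    fix m \<beta>
    show "V m \<beta> = 0"
      using low[of "k + 1"] kalgD(2)[OF stab_kalg[OF V], of m \<beta>] by (cases "mdeg n \<beta> \<le> k + 2") auto
  qed
qed

lemma stab_eq_if_lin_coeffs_eq:
  assumes "V \<in> stab n k \<Gamma>" "W \<in> stab n k \<Gamma>" "\<forall>p<n. \<forall>q<n. V p (munit q) = W p (munit q)"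
  shows "V = W"
proof -
  have "(\<lambda>l \<alpha>. 1 * V l \<alpha> + (-1) * W l \<alpha>) = (\<lambda>_ _. 0)"
    by (rule stab_eq_0_if_lin_coeffs_eq_0[OF stab_lincomb[OF assms(1,2)]]) (use assms(3) in simp)
  then show ?thesis by (auto simp: fun_eq_iff dest: fun_cong)
qed

subsection \<open>The equations in degrees 0 and 1\<close>

text \<open>Let \<open>a p q\<close> be the coefficient of \<open>x\<^sub>q\<close> in \<open>V\<^sup>p\<close>. In degree 0 the stabilizer equation
  reads \<open>\<partial>\<^sub>i\<partial>\<^sub>j V\<^sup>l(0) = hess0 n \<Gamma> a l i j\<close>; in degree 1, at \<open>x\<^sub>q\<close>, it reads
  \<open>\<partial>\<^sub>q\<partial>\<^sub>i\<partial>\<^sub>j V\<^sup>l(0) = - ord1 n \<Gamma> a l i j q\<close>. Symmetry of third derivatives in \<open>q\<close> and \<open>i\<close>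
  turns the latter into linear constraints on \<open>a\<close> alone.\<close>

definition hess0 :: "nat \<Rightarrow> (nat \<Rightarrow> nat \<Rightarrow> nat \<Rightarrow> rpoly) \<Rightarrow> (nat \<Rightarrow> nat \<Rightarrow> real) \<Rightarrow> nat \<Rightarrow> nat \<Rightarrow> nat \<Rightarrow> real"
  where "hess0 n \<Gamma> a l i j = (\<Sum>m<n. \<Gamma> m i j mzero * a l m)
    - (\<Sum>m<n. \<Gamma> l m j mzero * a m i) - (\<Sum>m<n. \<Gamma> l i m mzero * a m j)"

definition ord1 :: "nat \<Rightarrow> (nat \<Rightarrow> nat \<Rightarrow> nat \<Rightarrow> rpoly) \<Rightarrow> (nat \<Rightarrow> nat \<Rightarrow> real) \<Rightarrow> nat \<Rightarrow> nat \<Rightarrow> nat \<Rightarrow> nat \<Rightarrow> real"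
  where "ord1 n \<Gamma> a l i j q = (\<Sum>m<n. a m q * \<Gamma> l i j (munit m))
    - (\<Sum>m<n. \<Gamma> m i j mzero * hess0 n \<Gamma> a l q m + \<Gamma> m i j (munit q) * a l m)
    + (\<Sum>m<n. \<Gamma> l m j mzero * hess0 n \<Gamma> a m q i + \<Gamma> l m j (munit q) * a m i)
    + (\<Sum>m<n. \<Gamma> l i m mzero * hess0 n \<Gamma> a m q j + \<Gamma> l i m (munit q) * a m j)"

definition constraint :: "nat \<Rightarrow> (nat \<Rightarrow> nat \<Rightarrow> nat \<Rightarrow> rpoly) \<Rightarrow> (nat \<Rightarrow> nat \<Rightarrow> real) \<Rightarrow> nat \<times> nat \<times> nat \<times> nat \<Rightarrow> real"
  where "constraint n \<Gamma> a = (\<lambda>(l, i, j, q). ord1 n \<Gamma> a l i j q - ord1 n \<Gamma> a l q j i)"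

definition index_quads :: "nat \<Rightarrow> (nat \<times> nat \<times> nat \<times> nat) set" where
  "index_quads n = {..<n} \<times> {..<n} \<times> {..<n} \<times> {..<n}"

lemma finite_index_quads [simp]: "finite (index_quads n)"
  by (simp add: index_quads_def)

lemma stab_hess0:
  assumes V: "V \<in> stab n k \<Gamma>" and "l < n" "i < n" "j < n"
  shows "pdiff i (pdiff j (V l)) mzero = hess0 n \<Gamma> (lin_coeffs V) l i j"
  using stab_lie_eq_0[OF V assms(2-4), of mzero] lie_mzero[of V n \<Gamma> l i j] kalgD(3)[OF stab_kalg[OF V]]
  by (simp add: hess0_def algebra_simps)

lemma stab_third_derivative:
  assumes V: "V \<in> stab n k \<Gamma>" and "1 \<le> k" "l < n" "i < n" "j < n" "q < n"
  shows "pdiff q (pdiff i (pdiff j (V l))) mzero = - ord1 n \<Gamma> (lin_coeffs V) l i j q"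
proof -
  have z: "\<forall>m. V m mzero = 0" using kalgD(3)[OF stab_kalg[OF V]] by blast
  have "lie n V \<Gamma> l i j (munit q) = 0" using stab_lie_eq_0[OF V assms(3-5)] assms(2,6) by simp
  then show ?thesis
    unfolding lie_munit[where V = V, OF z] ord1_def
    using assms(3-6) by (simp add: stab_hess0[OF V] algebra_simps cong: sum.cong_simp)
qed

lemma stab_constraint:
  assumes V: "V \<in> stab n k \<Gamma>" and "1 \<le> k" "r \<in> index_quads n"
  shows "constraint n \<Gamma> (lin_coeffs V) r = 0"
proof -
  obtain l i j q where r: "r = (l, i, j, q)" "l < n" "i < n" "j < n" "q < n"
    using assms(3) by (auto simp: index_quads_def)
  have "pdiff q (pdiff i (pdiff j (V l))) mzero = pdiff i (pdiff q (pdiff j (V l))) mzero"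
    by (simp add: pdiff_commute)
  then show ?thesis
    using stab_third_derivative[OF V assms(2)] r by (simp add: constraint_def)
qed

lemma constraint_lincomb:
  "constraint n \<Gamma> (\<lambda>x y. c * a x y + d * b x y) r = c * constraint n \<Gamma> a r + d * constraint n \<Gamma> b r"
proof -
  have "hess0 n \<Gamma> (\<lambda>x y. c * a x y + d * b x y) l i j = c * hess0 n \<Gamma> a l i j + d * hess0 n \<Gamma> b l i j"
    for l i j by (simp add: hess0_def sum.distrib sum_distrib_left algebra_simps)
  then have "ord1 n \<Gamma> (\<lambda>x y. c * a x y + d * b x y) l i j q = c * ord1 n \<Gamma> a l i j q + d * ord1 n \<Gamma> b l i j q"
    for l i j q by (simp add: ord1_def sum.distrib sum_distrib_left algebra_simps)
  then show ?thesis by (simp add: constraint_def algebra_simps split: prod.splits)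
qed

lemma constraint_sum:
  assumes "finite C"
  shows "constraint n \<Gamma> (\<lambda>x y. \<Sum>c\<in>C. f c * u c x y) r = (\<Sum>c\<in>C. f c * constraint n \<Gamma> (u c) r)"
  using assms
proof (induction C rule: finite_induct)
  case empty
  then show ?case using constraint_lincomb[of n \<Gamma> 0 "\<lambda>_ _. 0" 0 "\<lambda>_ _. 0" r] by simp
next
  case (insert c C)
  then show ?case using constraint_lincomb[of n \<Gamma> "f c" "u c" 1] by simp
qed

lemma constraint_cong:
  assumes "r \<in> index_quads n" "\<forall>x<n. \<forall>y<n. a x y = b x y"
  shows "constraint n \<Gamma> a r = constraint n \<Gamma> b r"
proof -
  have "hess0 n \<Gamma> a l i j = hess0 n \<Gamma> b l i j" if "l < n" "i < n" "j < n" for l i j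
    using that assms(2) by (simp add: hess0_def)
  then have "ord1 n \<Gamma> a l i j q = ord1 n \<Gamma> b l i j q" if "l < n" "i < n" "j < n" "q < n" for l i j q
    using that assms(2) by (simp add: ord1_def cong: sum.cong_simp)
  then show ?thesis using assms(1) by (auto simp: constraint_def index_quads_def)
qed

text \<open>Matrices \<open>a\<close> with indices below \<open>n\<close> are encoded as vectors of length \<open>n * n\<close>,
  the entry \<open>a p q\<close> sitting at position \<open>p * n + q\<close>.\<close>

definition mat_unit :: "nat \<Rightarrow> nat \<Rightarrow> nat \<Rightarrow> nat \<Rightarrow> real" where
  "mat_unit n c = (\<lambda>x y. if x = c div n \<and> y = c mod n then 1 else 0)"

lemma index_pair_less:
  assumes "p < n" "q < n" shows "p * n + q < n * (n::nat)"
proof -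
  have "p * n + q < (p + 1) * n" using assms(2) by simp
  also have "\<dots> \<le> n * n" using assms(1) by (intro mult_right_mono) auto
  finally show ?thesis .
qed

lemma div_mod_less:
  assumes "c < n * (n::nat)" shows "c div n < n" "c mod n < n"
proof -
  have "0 < n" using assms by (cases n) auto
  then show "c div n < n" "c mod n < n" using assms by (simp_all add: less_mult_imp_div_less)
qed

lemma sum_mat_unit:
  assumes "x < n" "y < n"
  shows "(\<Sum>c<n * n. a (c div n) (c mod n) * mat_unit n c x y) = a x y"
proof -
  have "a (c div n) (c mod n) * mat_unit n c x y = (if c = x * n + y then a x y else 0)" for c
  proof -
    have "(x = c div n \<and> y = c mod n) \<longleftrightarrow> c = x * n + y" using assms by auto
    then show ?thesis unfolding mat_unit_def by auto
  qed
  then have "(\<Sum>c<n * n. a (c div n) (c mod n) * mat_unit n c x y)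
      = (\<Sum>c<n * n. if c = x * n + y then a x y else 0)"
    by simp
  also have "\<dots> = a x y" using index_pair_less[OF assms] by simp
  finally show ?thesis .
qed

lemma constraint_eq_sum_columns:
  assumes "r \<in> index_quads n"
  shows "constraint n \<Gamma> a r = (\<Sum>c<n * n. a (c div n) (c mod n) * constraint n \<Gamma> (mat_unit n c) r)"
proof -
  have "constraint n \<Gamma> a r = constraint n \<Gamma> (\<lambda>x y. \<Sum>c<n * n. a (c div n) (c mod n) * mat_unit n c x y) r"
    by (rule constraint_cong[OF assms]) (simp add: sum_mat_unit)
  then show ?thesis by (simp add: constraint_sum)
qed

subsection \<open>Gram matrices\<close>

definition gram_mat :: "nat \<Rightarrow> 'r set \<Rightarrow> (nat \<Rightarrow> 'r \<Rightarrow> real) \<Rightarrow> real Matrix.mat" where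
  "gram_mat N R f = Matrix.mat N N (\<lambda>(c, c'). \<Sum>r\<in>R. f c r * f c' r)"

lemma gram_mat_carrier: "gram_mat N R f \<in> carrier_mat N N"
  by (simp add: gram_mat_def)

lemma gram_mat_mult_vec:
  assumes "c < N"
  shows "(gram_mat N R f *\<^sub>v Matrix.vec N v) $ c = (\<Sum>r\<in>R. f c r * (\<Sum>c'<N. v c' * f c' r))"
proof -
  have "(gram_mat N R f *\<^sub>v Matrix.vec N v) $ c = (\<Sum>c'<N. (\<Sum>r\<in>R. f c r * f c' r) * v c')"
    using assms by (simp add: gram_mat_def scalar_prod_def atLeast0LessThan)
  also have "\<dots> = (\<Sum>c'<N. \<Sum>r\<in>R. f c r * (v c' * f c' r))"
    by (simp add: sum_distrib_left sum_distrib_right mult_ac)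
  also have "\<dots> = (\<Sum>r\<in>R. \<Sum>c'<N. f c r * (v c' * f c' r))"
    by (rule sum.swap)
  also have "\<dots> = (\<Sum>r\<in>R. f c r * (\<Sum>c'<N. v c' * f c' r))"
    by (simp add: sum_distrib_left)
  finally show ?thesis .
qed

lemma gram_mat_quadratic_form:
  "(\<Sum>c<N. v c * (gram_mat N R f *\<^sub>v Matrix.vec N v) $ c) = (\<Sum>r\<in>R. (\<Sum>c<N. v c * f c r)\<^sup>2)"
proof -
  have "(\<Sum>c<N. v c * (gram_mat N R f *\<^sub>v Matrix.vec N v) $ c)
      = (\<Sum>c<N. \<Sum>r\<in>R. v c * f c r * (\<Sum>c'<N. v c' * f c' r))"
    by (intro sum.cong refl) (simp add: gram_mat_mult_vec sum_distrib_left mult.assoc)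
  also have "\<dots> = (\<Sum>r\<in>R. \<Sum>c<N. v c * f c r * (\<Sum>c'<N. v c' * f c' r))"
    by (rule sum.swap)
  also have "\<dots> = (\<Sum>r\<in>R. (\<Sum>c<N. v c * f c r)\<^sup>2)"
    by (simp add: power2_eq_square sum_distrib_right)
  finally show ?thesis .
qed

lemma det_gram_mat_neq_0_iff:
  assumes "finite R"
  shows "Determinant.det (gram_mat N R f) \<noteq> 0 \<longleftrightarrow>
     (\<forall>v. (\<forall>r\<in>R. (\<Sum>c<N. v c * f c r) = 0) \<longrightarrow> (\<forall>c<N. v c = 0))"
proof (intro iffI allI impI)
  fix v :: "nat \<Rightarrow> real" and c
  assume det: "Determinant.det (gram_mat N R f) \<noteq> 0"
    and v: "\<forall>r\<in>R. (\<Sum>c<N. v c * f c r) = 0" and "c < N"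
  have "gram_mat N R f *\<^sub>v Matrix.vec N v = 0\<^sub>v N"
  proof (rule eq_vecI)
    show "dim_vec (gram_mat N R f *\<^sub>v Matrix.vec N v) = dim_vec (0\<^sub>v N :: real Matrix.vec)"
      by (simp add: gram_mat_def)
  qed (simp add: gram_mat_mult_vec v)
  then have "Matrix.vec N v = 0\<^sub>v N"
    using det det_0_iff_vec_prod_zero[OF gram_mat_carrier] by (meson vec_carrier)
  then have "Matrix.vec N v $ c = 0" using \<open>c < N\<close> by simp
  then show "v c = 0" using \<open>c < N\<close> by simp
next
  assume inj: "\<forall>v. (\<forall>r\<in>R. (\<Sum>c<N. v c * f c r) = 0) \<longrightarrow> (\<forall>c<N. v c = 0)"
  show "Determinant.det (gram_mat N R f) \<noteq> 0"
  proof
    assume "Determinant.det (gram_mat N R f) = 0"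
    then obtain w where w: "w \<in> carrier_vec N" "w \<noteq> 0\<^sub>v N" "gram_mat N R f *\<^sub>v w = 0\<^sub>v N"
      using det_0_iff_vec_prod_zero[OF gram_mat_carrier] by blast
    define v where "v c = w $ c" for c
    have w_eq: "w = Matrix.vec N v"
      using w(1) by (intro eq_vecI) (simp_all add: v_def)
    have "(\<Sum>r\<in>R. (\<Sum>c<N. v c * f c r)\<^sup>2) = 0"
      using w(3) by (simp add: gram_mat_quadratic_form[symmetric] w_eq)
    then have "\<forall>r\<in>R. (\<Sum>c<N. v c * f c r)\<^sup>2 = 0"
      using sum_nonneg_eq_0_iff[OF assms, of "\<lambda>r. (\<Sum>c<N. v c * f c r)\<^sup>2"] by simp
    then have "v c = 0" if "c < N" for c
      using inj that by simp
    then have "w = 0\<^sub>v N"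
      using w(1) by (intro eq_vecI) (simp_all add: v_def)
    then show False using w(2) by simp
  qed
qed

definition constraint_gram :: "nat \<Rightarrow> (nat \<Rightarrow> nat \<Rightarrow> nat \<Rightarrow> rpoly) \<Rightarrow> real Matrix.mat" where
  "constraint_gram n \<Gamma> = gram_mat (n * n) (index_quads n) (\<lambda>c. constraint n \<Gamma> (mat_unit n c))"

lemma constraint_gram_carrier: "constraint_gram n \<Gamma> \<in> carrier_mat (n * n) (n * n)"
  by (simp add: constraint_gram_def gram_mat_carrier)

lemma det_constraint_gram_neq_0_iff:
  "Determinant.det (constraint_gram n \<Gamma>) \<noteq> 0 \<longleftrightarrow>
     (\<forall>a. (\<forall>r\<in>index_quads n. constraint n \<Gamma> a r = 0) \<longrightarrow> (\<forall>p<n. \<forall>q<n. a p q = 0))"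
  unfolding constraint_gram_def det_gram_mat_neq_0_iff[OF finite_index_quads]
proof (intro iffI allI impI)
  fix a :: "nat \<Rightarrow> nat \<Rightarrow> real" and p q
  assume inj: "\<forall>v. (\<forall>r\<in>index_quads n. (\<Sum>c<n * n. v c * constraint n \<Gamma> (mat_unit n c) r) = 0)
      \<longrightarrow> (\<forall>c<n * n. v c = 0)"
    and a: "\<forall>r\<in>index_quads n. constraint n \<Gamma> a r = 0" and "p < n" "q < n"
  have "(\<Sum>c<n * n. a (c div n) (c mod n) * constraint n \<Gamma> (mat_unit n c) r) = 0"
    if "r \<in> index_quads n" for r
    using a constraint_eq_sum_columns[OF that, of \<Gamma> a] that by simp
  then have "a ((p * n + q) div n) ((p * n + q) mod n) = 0"
    using inj[rule_format, of "\<lambda>c. a (c div n) (c mod n)"] index_pair_less[OF \<open>p < n\<close> \<open>q < n\<close>]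
    by blast
  then show "a p q = 0"
    using \<open>q < n\<close> by simp
next
  fix v :: "nat \<Rightarrow> real" and c
  assume inj: "\<forall>a. (\<forall>r\<in>index_quads n. constraint n \<Gamma> a r = 0) \<longrightarrow> (\<forall>p<n. \<forall>q<n. a p q = 0)"
    and v: "\<forall>r\<in>index_quads n. (\<Sum>c<n * n. v c * constraint n \<Gamma> (mat_unit n c) r) = 0"
    and "c < n * n"
  define a where "a p q = v (p * n + q)" for p q
  have a_v: "a (c div n) (c mod n) = v c" for c by (simp add: a_def mult.commute)
  have "constraint n \<Gamma> a r = 0" if "r \<in> index_quads n" for r
    using v constraint_eq_sum_columns[OF that, of \<Gamma> a] that by (simp add: a_v)
  then have "\<forall>p<n. \<forall>q<n. a p q = 0" using inj by blast
  then show "v c = 0"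
    using div_mod_less[OF \<open>c < n * n\<close>] a_v by metis
qed

subsection \<open>Openness\<close>

definition jet_nhds :: "nat \<Rightarrow> nat \<Rightarrow> (nat \<Rightarrow> nat \<Rightarrow> nat \<Rightarrow> rpoly) \<Rightarrow> (nat \<Rightarrow> nat \<Rightarrow> nat \<Rightarrow> rpoly) filter"
  where "jet_nhds n k \<Gamma> = (INF d\<in>{0::real<..}. principal {\<Gamma>' \<in> Fjets n k. jdist n k \<Gamma> \<Gamma>' < d})"

lemma eventually_jet_nhds:
  "eventually P (jet_nhds n k \<Gamma>) \<longleftrightarrow> (\<exists>d>0. \<forall>\<Gamma>'\<in>Fjets n k. jdist n k \<Gamma> \<Gamma>' < d \<longrightarrow> P \<Gamma>')"
proof -
  have "eventually P (jet_nhds n k \<Gamma>) \<longleftrightarrow>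
      (\<exists>d\<in>{0::real<..}. eventually P (principal {\<Gamma>' \<in> Fjets n k. jdist n k \<Gamma> \<Gamma>' < d}))"
    unfolding jet_nhds_def
  proof (rule eventually_INF_base)
    fix a b :: real assume "a \<in> {0<..}" "b \<in> {0<..}"
    then show "\<exists>x\<in>{0<..}. principal {\<Gamma>' \<in> Fjets n k. jdist n k \<Gamma> \<Gamma>' < x}
        \<le> inf (principal {\<Gamma>' \<in> Fjets n k. jdist n k \<Gamma> \<Gamma>' < a})
              (principal {\<Gamma>' \<in> Fjets n k. jdist n k \<Gamma> \<Gamma>' < b})"
      by (intro bexI[of _ "min a b"]) auto
  qed auto
  then show ?thesis by (auto simp: eventually_principal)
qed

lemma open_in_F_nonzero:
  assumes "\<And>\<Gamma>. \<Gamma> \<in> Fjets n k \<Longrightarrow> (f \<longlongrightarrow> f \<Gamma>) (jet_nhds n k \<Gamma>)"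
  shows "open_in_F n k {\<Gamma> \<in> Fjets n k. f \<Gamma> \<noteq> (0::real)}"
  unfolding open_in_F_def
proof (intro conjI ballI)
  fix \<Gamma> assume "\<Gamma> \<in> {\<Gamma> \<in> Fjets n k. f \<Gamma> \<noteq> 0}"
  then have "eventually (\<lambda>\<Gamma>'. f \<Gamma>' \<noteq> 0) (jet_nhds n k \<Gamma>)"
    using assms tendsto_imp_eventually_ne by blast
  then show "\<exists>e>0. \<forall>\<Gamma>'\<in>Fjets n k. jdist n k \<Gamma> \<Gamma>' < e \<longrightarrow> \<Gamma>' \<in> {\<Gamma> \<in> Fjets n k. f \<Gamma> \<noteq> 0}"
    unfolding eventually_jet_nhds by auto
qed auto

lemma jdist_ge_coeff:
  assumes "l < n" "i < n" "j < n" "\<alpha> \<in> mis n k"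
  shows "\<bar>\<Gamma> l i j \<alpha> - \<Gamma>' l i j \<alpha>\<bar> \<le> jdist n k \<Gamma> \<Gamma>'"
proof -
  have "\<bar>\<Gamma> l i j \<alpha> - \<Gamma>' l i j \<alpha>\<bar> \<le> (\<Sum>\<alpha>\<in>mis n k. \<bar>\<Gamma> l i j \<alpha> - \<Gamma>' l i j \<alpha>\<bar>)"
    by (rule member_le_sum) (use assms(4) finite_mis in auto)
  also have "\<dots> \<le> (\<Sum>j<n. \<Sum>\<alpha>\<in>mis n k. \<bar>\<Gamma> l i j \<alpha> - \<Gamma>' l i j \<alpha>\<bar>)"
    by (rule member_le_sum[where f = "\<lambda>j. \<Sum>\<alpha>\<in>mis n k. \<bar>\<Gamma> l i j \<alpha> - \<Gamma>' l i j \<alpha>\<bar>"])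
       (use assms in \<open>auto intro: sum_nonneg\<close>)
  also have "\<dots> \<le> (\<Sum>i<n. \<Sum>j<n. \<Sum>\<alpha>\<in>mis n k. \<bar>\<Gamma> l i j \<alpha> - \<Gamma>' l i j \<alpha>\<bar>)"
    by (rule member_le_sum[where f = "\<lambda>i. \<Sum>j<n. \<Sum>\<alpha>\<in>mis n k. \<bar>\<Gamma> l i j \<alpha> - \<Gamma>' l i j \<alpha>\<bar>"])
       (use assms in \<open>auto intro: sum_nonneg\<close>)
  also have "\<dots> \<le> jdist n k \<Gamma> \<Gamma>'"
    unfolding jdist_def
    by (rule member_le_sum[where f = "\<lambda>l. \<Sum>i<n. \<Sum>j<n. \<Sum>\<alpha>\<in>mis n k. \<bar>\<Gamma> l i j \<alpha> - \<Gamma>' l i j \<alpha>\<bar>"])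
       (use assms in \<open>auto intro: sum_nonneg\<close>)
  finally show ?thesis .
qed

lemma Fjets_coeff_eq_0:
  assumes "\<Gamma> \<in> Fjets n k" "\<not> (l < n \<and> i < n \<and> j < n \<and> \<alpha> \<in> mis n k)"
  shows "\<Gamma> l i j \<alpha> = 0"
  using assms by (auto simp: Fjets_def polys_def not_less)

lemma tendsto_jet_coeff:
  assumes "\<Gamma> \<in> Fjets n k"
  shows "((\<lambda>\<Gamma>'. \<Gamma>' l i j \<alpha>) \<longlongrightarrow> \<Gamma> l i j \<alpha>) (jet_nhds n k \<Gamma>)"
proof (cases "l < n \<and> i < n \<and> j < n \<and> \<alpha> \<in> mis n k")
  case True
  show ?thesis
  proof (rule tendstoI)
    fix e :: real assume "0 < e"
    then show "eventually (\<lambda>\<Gamma>'. dist (\<Gamma>' l i j \<alpha>) (\<Gamma> l i j \<alpha>) < e) (jet_nhds n k \<Gamma>)"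
      unfolding eventually_jet_nhds dist_real_def
      using jdist_ge_coeff[of l n i j \<alpha> k \<Gamma>] True
      by (intro exI[of _ e]) (auto simp: abs_minus_commute intro: le_less_trans)
  qed
next
  case False
  have "\<forall>\<Gamma>'\<in>Fjets n k. \<Gamma>' l i j \<alpha> = \<Gamma> l i j \<alpha>"
    using Fjets_coeff_eq_0[OF _ False] assms by metis
  then have "eventually (\<lambda>\<Gamma>'. \<Gamma>' l i j \<alpha> = \<Gamma> l i j \<alpha>) (jet_nhds n k \<Gamma>)"
    unfolding eventually_jet_nhds by (intro exI[of _ 1]) auto
  then show ?thesis by (rule tendsto_eventually)
qed

lemma tendsto_det_mat:
  fixes f :: "'x \<Rightarrow> nat \<times> nat \<Rightarrow> real"
  assumes "\<And>i j. i < N \<Longrightarrow> j < N \<Longrightarrow> ((\<lambda>x. f x (i, j)) \<longlongrightarrow> g (i, j)) F"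
  shows "((\<lambda>x. Determinant.det (Matrix.mat N N (f x))) \<longlongrightarrow> Determinant.det (Matrix.mat N N g)) F"
proof -
  have det: "Determinant.det (Matrix.mat N N h) =
      (\<Sum>p\<in>{p. p permutes {0..<N}}. signof p * (\<Prod>i=0..<N. h (i, p i)))" for h
    by (subst det_def'[of _ N]) (auto intro!: sum.cong prod.cong dest: permutes_in_image)
  show ?thesis
    unfolding det using assms
    by (intro tendsto_sum tendsto_mult tendsto_const tendsto_prod) (auto dest: permutes_in_image)
qed

lemma tendsto_constraint:
  assumes "\<Gamma> \<in> Fjets n k"
  shows "((\<lambda>\<Gamma>'. constraint n \<Gamma>' a r) \<longlongrightarrow> constraint n \<Gamma> a r) (jet_nhds n k \<Gamma>)"
  by (cases r) (simp add: constraint_def ord1_def hess0_def,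
      intro tendsto_intros tendsto_sum tendsto_jet_coeff[OF assms])

definition regular_jets :: "nat \<Rightarrow> nat \<Rightarrow> (nat \<Rightarrow> nat \<Rightarrow> nat \<Rightarrow> rpoly) set" where
  "regular_jets n k = {\<Gamma> \<in> Fjets n k. Determinant.det (constraint_gram n \<Gamma>) \<noteq> 0}"

lemma open_regular_jets: "open_in_F n k (regular_jets n k)"
  unfolding regular_jets_def constraint_gram_def gram_mat_def
  by (intro open_in_F_nonzero tendsto_det_mat)
     (simp, intro tendsto_sum tendsto_mult tendsto_constraint)

subsection \<open>Density\<close>

definition cyc :: "nat \<Rightarrow> nat \<Rightarrow> nat" where
  "cyc n l = Suc l mod n"

definition cyc_conn :: "nat \<Rightarrow> nat \<Rightarrow> nat \<Rightarrow> nat \<Rightarrow> rpoly" where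
  "cyc_conn n l i j \<alpha> = (if l < n \<and> i = cyc n l \<and> j = cyc n l \<and> \<alpha> = munit l then 1 else 0)"

lemma cyc_eq: "l < n \<Longrightarrow> cyc n l = (if Suc l = n then 0 else Suc l)"
  by (auto simp: cyc_def)

lemma cyc_less: "l < n \<Longrightarrow> cyc n l < n"
  by (simp add: cyc_eq)

lemma cyc_neq: "l < n \<Longrightarrow> 2 \<le> n \<Longrightarrow> cyc n l \<noteq> l"
  by (simp add: cyc_eq)

lemma cyc_cyc_neq: "l < n \<Longrightarrow> 3 \<le> n \<Longrightarrow> cyc n (cyc n l) \<noteq> l"
  using cyc_less[of l n] by (auto simp: cyc_eq split: if_splits)

lemma cyc_inj: "l < n \<Longrightarrow> q < n \<Longrightarrow> cyc n l = cyc n q \<Longrightarrow> l = q"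
  by (auto simp: cyc_eq split: if_splits)

lemma cyc_surj: "p < n \<Longrightarrow> \<exists>l<n. cyc n l = p"
  by (cases p) (auto simp: cyc_eq intro: exI[of _ "n - 1"] exI[of _ "p - 1"])

lemma cyc_conn_Fjets:
  assumes "1 \<le> k" shows "cyc_conn n \<in> Fjets n k"
proof -
  have "cyc_conn n l i j \<in> polys n k" for l i j
    using assms by (auto simp: polys_def cyc_conn_def mis_def)
  moreover have "cyc_conn n l i j = (\<lambda>_. 0)" if "n \<le> l \<or> n \<le> i \<or> n \<le> j" for l i j
    using that cyc_less[of l n] by (auto simp: cyc_conn_def fun_eq_iff)
  ultimately show ?thesis by (auto simp: Fjets_def cyc_conn_def fun_eq_iff)
qed

lemma ord1_cyc_conn:
  assumes "l < n" "q < n"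
  shows "ord1 n (cyc_conn n) a l i j q = (if i = cyc n l \<and> j = cyc n l then a l q else 0)
     - (if i = cyc n q \<and> j = cyc n q then a l q else 0)
     + (if j = cyc n l \<and> q = l then a (cyc n l) i else 0)
     + (if i = cyc n l \<and> q = l then a (cyc n l) j else 0)"
proof -
  have "cyc n l < n" using cyc_less assms by blast
  moreover have "a m q * cyc_conn n l i j (munit m)
      = (if m = l then (if i = cyc n l \<and> j = cyc n l then a l q else 0) else 0)" for m
    using assms by (simp add: cyc_conn_def)
  moreover have "cyc_conn n m i j mzero * hess0 n (cyc_conn n) a l q m + cyc_conn n m i j (munit q) * a l m
      = (if m = q then (if i = cyc n q \<and> j = cyc n q then a l q else 0) else 0)" for m
    using assms by (simp add: cyc_conn_def)
  moreover have "cyc_conn n l m j mzero * hess0 n (cyc_conn n) a m q i + cyc_conn n l m j (munit q) * a m i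
      = (if m = cyc n l then (if j = cyc n l \<and> q = l then a (cyc n l) i else 0) else 0)" for m
    using assms by (simp add: cyc_conn_def)
  moreover have "cyc_conn n l i m mzero * hess0 n (cyc_conn n) a m q j + cyc_conn n l i m (munit q) * a m j
      = (if m = cyc n l then (if i = cyc n l \<and> q = l then a (cyc n l) j else 0) else 0)" for m
    using assms by (simp add: cyc_conn_def)
  ultimately show ?thesis
    unfolding ord1_def using assms by (simp only: sum.delta finite_lessThan lessThan_iff if_True)
qed

text \<open>The hypothesis \<open>n \<ge> 3\<close> enters through \<open>cyc n (cyc n l) \<noteq> l\<close>.\<close>

lemma cyc_conn_constraint_trivial:
  assumes "3 \<le> n" and a: "\<forall>r\<in>index_quads n. constraint n (cyc_conn n) a r = 0"
    and "p < n" "q < n"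
  shows "a p q = 0"
proof -
  obtain l where l: "l < n" "cyc n l = p" using cyc_surj[OF \<open>p < n\<close>] by blast
  have "cyc n l \<noteq> l" "cyc n (cyc n l) \<noteq> l" using cyc_neq cyc_cyc_neq l(1) assms(1) by auto
  note facts = this l(1) cyc_less[OF l(1)]
  show ?thesis
  proof (cases "q = l")
    case True
    have "constraint n (cyc_conn n) a (l, l, l, cyc n l) = 0"
      using a facts by (auto simp: index_quads_def)
    then show ?thesis using True l facts by (simp add: constraint_def ord1_cyc_conn)
  next
    case False
    have "constraint n (cyc_conn n) a (l, l, cyc n l, q) = 0"
      using a facts \<open>q < n\<close> by (auto simp: index_quads_def)
    moreover have "cyc n q \<noteq> cyc n l" using cyc_inj l(1) \<open>q < n\<close> False by blast
    ultimately show ?thesis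
      using l facts \<open>q < n\<close> False by (auto simp: constraint_def ord1_cyc_conn split: if_splits)
  qed
qed

lemma det_constraint_gram_cyc_conn: "3 \<le> n \<Longrightarrow> Determinant.det (constraint_gram n (cyc_conn n)) \<noteq> 0"
  using cyc_conn_constraint_trivial det_constraint_gram_neq_0_iff by blast

lemma det_quadratic_pencil_nonzero_near_0:
  fixes A B C :: "real Matrix.mat"
  assumes carrier: "A \<in> carrier_mat N N" "B \<in> carrier_mat N N" "C \<in> carrier_mat N N"
    and "Determinant.det C \<noteq> 0" and "0 < e"
  obtains s where "0 < s" "s < e" "Determinant.det (A + s \<cdot>\<^sub>m B + s\<^sup>2 \<cdot>\<^sub>m C) \<noteq> 0"
proof -
  \<comment> \<open>For \<open>s = 1 / u\<close> the pencil is \<open>s\<^sup>2 (C + u B + u\<^sup>2 A)\<close>, and \<open>det (C + u B + u\<^sup>2 A)\<close>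
    is a polynomial in \<open>u\<close> that does not vanish at \<open>u = 0\<close>.\<close>
  define P where "P = Matrix.mat N N (\<lambda>ij. [:C $$ ij, B $$ ij, A $$ ij:])"
  have eval: "Determinant.det (C + u \<cdot>\<^sub>m B + u\<^sup>2 \<cdot>\<^sub>m A) = poly (Determinant.det P) u" for u
  proof -
    interpret ev: comm_ring_hom "\<lambda>p::real poly. poly p u" by unfold_locales auto
    have "map_mat (\<lambda>p. poly p u) P = C + u \<cdot>\<^sub>m B + u\<^sup>2 \<cdot>\<^sub>m A"
      using carrier by (intro eq_matI) (auto simp: P_def algebra_simps power2_eq_square)
    then show ?thesis using ev.hom_det[of P] by simp
  qed
  have "C + 0 \<cdot>\<^sub>m B + 0\<^sup>2 \<cdot>\<^sub>m A = C"
    using carrier by (intro eq_matI) auto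
  then have "Determinant.det P \<noteq> 0" using eval[of 0] assms(4) by auto
  then have "finite {u. poly (Determinant.det P) u = 0}" by (rule poly_roots_finite)
  then have "\<not> {1 / e<..} \<subseteq> {u. poly (Determinant.det P) u = 0}"
    using infinite_Ioi finite_subset by blast
  then obtain u where u: "1 / e < u" "poly (Determinant.det P) u \<noteq> 0" by auto
  have "0 < u" using u(1) \<open>0 < e\<close> less_trans[of 0 "1 / e" u] by simp
  define s where "s = 1 / u"
  have "0 < s" "s < e"
    using u(1) \<open>0 < u\<close> \<open>0 < e\<close> by (auto simp: s_def field_simps)
  moreover have pencil: "A + s \<cdot>\<^sub>m B + s\<^sup>2 \<cdot>\<^sub>m C = s\<^sup>2 \<cdot>\<^sub>m (C + u \<cdot>\<^sub>m B + u\<^sup>2 \<cdot>\<^sub>m A)"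
    using carrier \<open>0 < u\<close> by (intro eq_matI) (auto simp: s_def field_simps power2_eq_square)
  have "Determinant.det (A + s \<cdot>\<^sub>m B + s\<^sup>2 \<cdot>\<^sub>m C) = (s\<^sup>2) ^ N * Determinant.det (C + u \<cdot>\<^sub>m B + u\<^sup>2 \<cdot>\<^sub>m A)"
    unfolding pencil det_smult using carrier by simp
  then have "Determinant.det (A + s \<cdot>\<^sub>m B + s\<^sup>2 \<cdot>\<^sub>m C) = (s\<^sup>2) ^ N * poly (Determinant.det P) u"
    by (simp only: eval)
  ultimately show ?thesis using that u(2) by simp
qed

definition perturb :: "nat \<Rightarrow> (nat \<Rightarrow> nat \<Rightarrow> nat \<Rightarrow> rpoly) \<Rightarrow> real \<Rightarrow> nat \<Rightarrow> nat \<Rightarrow> nat \<Rightarrow> rpoly"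
  where "perturb n \<Gamma> s = (\<lambda>l i j \<alpha>. \<Gamma> l i j \<alpha> + s * cyc_conn n l i j \<alpha>)"

lemma constraint_perturb:
  "constraint n (perturb n \<Gamma> s) a r = constraint n \<Gamma> a r + s * constraint n (cyc_conn n) a r"
proof -
  have const: "cyc_conn n l i j mzero = 0" for l i j by (simp add: cyc_conn_def)
  have "hess0 n (perturb n \<Gamma> s) a = hess0 n \<Gamma> a"
    by (simp add: fun_eq_iff hess0_def perturb_def const)
  then have "ord1 n (perturb n \<Gamma> s) a l i j q = ord1 n \<Gamma> a l i j q + s * ord1 n (cyc_conn n) a l i j q"
    for l i j q
    by (simp add: ord1_def perturb_def const sum.distrib sum_distrib_left algebra_simps)
  then show ?thesis by (simp add: constraint_def algebra_simps split: prod.splits)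
qed

lemma constraint_gram_perturb:
  obtains B where "B \<in> carrier_mat (n * n) (n * n)"
    "\<And>s. constraint_gram n (perturb n \<Gamma> s)
       = constraint_gram n \<Gamma> + s \<cdot>\<^sub>m B + s\<^sup>2 \<cdot>\<^sub>m constraint_gram n (cyc_conn n)"
proof
  define x where "x c = constraint n \<Gamma> (mat_unit n c)" for c
  define y where "y c = constraint n (cyc_conn n) (mat_unit n c)" for c
  show "constraint_gram n (perturb n \<Gamma> s) = constraint_gram n \<Gamma>
      + s \<cdot>\<^sub>m Matrix.mat (n * n) (n * n) (\<lambda>(c, c'). \<Sum>r\<in>index_quads n. x c r * y c' r + y c r * x c' r)
      + s\<^sup>2 \<cdot>\<^sub>m constraint_gram n (cyc_conn n)" for s
    by (intro eq_matI)
       (auto simp: constraint_gram_def gram_mat_def constraint_perturb x_def y_def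
          sum.distrib sum_distrib_left algebra_simps power2_eq_square)
qed simp

lemma jdist_perturb: "jdist n k \<Gamma> (perturb n \<Gamma> s) = \<bar>s\<bar> * jdist n k (\<lambda>_ _ _ _. 0) (cyc_conn n)"
  by (simp add: jdist_def perturb_def sum_distrib_left abs_mult)

lemma Fjets_perturb:
  assumes "\<Gamma> \<in> Fjets n k" "1 \<le> k"
  shows "perturb n \<Gamma> s \<in> Fjets n k"
  using assms(1) cyc_conn_Fjets[OF assms(2)] unfolding Fjets_def polys_def perturb_def
  by (auto simp: fun_eq_iff) (metis add.right_neutral mult_zero_right)

lemma dense_regular_jets:
  assumes "3 \<le> n" "1 \<le> k"
  shows "dense_in_F n k (regular_jets n k)"
  unfolding dense_in_F_def
proof (intro ballI allI impI)
  fix \<Gamma> and e :: real assume \<Gamma>: "\<Gamma> \<in> Fjets n k" and "0 < e"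
  define J where "J = jdist n k (\<lambda>_ _ _ _. 0) (cyc_conn n)"
  have "0 \<le> J" unfolding J_def jdist_def by (intro sum_nonneg) auto
  then have "0 < e / (J + 1)" using \<open>0 < e\<close> by simp
  obtain B where B: "B \<in> carrier_mat (n * n) (n * n)"
    and gram: "\<And>s. constraint_gram n (perturb n \<Gamma> s)
       = constraint_gram n \<Gamma> + s \<cdot>\<^sub>m B + s\<^sup>2 \<cdot>\<^sub>m constraint_gram n (cyc_conn n)"
    using constraint_gram_perturb[of n \<Gamma>] by blast
  obtain s where s: "0 < s" "s < e / (J + 1)"
    and "Determinant.det (constraint_gram n \<Gamma> + s \<cdot>\<^sub>m B + s\<^sup>2 \<cdot>\<^sub>m constraint_gram n (cyc_conn n)) \<noteq> 0"
    by (rule det_quadratic_pencil_nonzero_near_0[OF constraint_gram_carrier B constraint_gram_carrier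
          det_constraint_gram_cyc_conn[OF assms(1)] \<open>0 < e / (J + 1)\<close>])
  then have "perturb n \<Gamma> s \<in> regular_jets n k"
    using Fjets_perturb[OF \<Gamma> assms(2)] by (simp add: regular_jets_def gram)
  moreover have "jdist n k \<Gamma> (perturb n \<Gamma> s) < e"
  proof -
    have "jdist n k \<Gamma> (perturb n \<Gamma> s) = s * J" using s(1) by (simp add: jdist_perturb J_def)
    also have "\<dots> \<le> s * (J + 1)" using s(1) by simp
    also have "\<dots> < e" using s(2) \<open>0 \<le> J\<close> by (simp add: field_simps)
    finally show ?thesis .
  qed
  ultimately show "\<exists>\<Gamma>'\<in>regular_jets n k. jdist n k \<Gamma> \<Gamma>' < e" by blast
qed

lemma stab_regular_jets:
  assumes "1 \<le> k" "\<Gamma> \<in> regular_jets n k"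
  shows "stab n k \<Gamma> = {(\<lambda>_ _. 0)}"
proof -
  have "V = (\<lambda>_ _. 0)" if V: "V \<in> stab n k \<Gamma>" for V
  proof (rule stab_eq_0_if_lin_coeffs_eq_0[OF V])
    have "\<forall>r\<in>index_quads n. constraint n \<Gamma> (lin_coeffs V) r = 0"
      using stab_constraint[OF V assms(1)] by blast
    then show "\<forall>p<n. \<forall>q<n. V p (munit q) = 0"
      using assms(2) det_constraint_gram_neq_0_iff by (auto simp: regular_jets_def)
  qed
  then show ?thesis using zero_in_stab by blast
qed

subsection \<open>Jets of order 0\<close>

definition mpair :: "nat \<Rightarrow> nat \<Rightarrow> mindex" where
  "mpair i j = (\<lambda>t. munit i t + munit j t)"

lemma mpair_MI: "i < n \<Longrightarrow> j < n \<Longrightarrow> mpair i j \<in> MI n"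
  by (simp add: MI_def mpair_def munit_def)

lemma mdeg_mpair: "i < n \<Longrightarrow> j < n \<Longrightarrow> mdeg n (mpair i j) = 2"
  by (simp add: mdeg_def mpair_def munit_def sum.distrib)

lemma mpair_neq [simp]: "mpair i j \<noteq> mzero" "mpair i j \<noteq> munit q"
proof -
  have "mpair i j i \<noteq> 0" by (simp add: mpair_def munit_def)
  then show "mpair i j \<noteq> mzero" by auto
  show "mpair i j \<noteq> munit q"
  proof
    assume eq: "mpair i j = munit q"
    show False
      using fun_cong[OF eq, of i] fun_cong[OF eq, of j] by (auto simp: mpair_def munit_def split: if_splits)
  qed
qed

lemma mpair_eq_iff: "mpair i j = mpair i' j' \<longleftrightarrow> (i' = i \<and> j' = j) \<or> (i' = j \<and> j' = i)"
proof
  assume eq: "mpair i j = mpair i' j'"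
  have "i' = i \<or> i' = j" using fun_cong[OF eq, of i'] by (auto simp: mpair_def munit_def split: if_splits)
  moreover have "j' = i \<or> j' = j" using fun_cong[OF eq, of j'] by (auto simp: mpair_def munit_def split: if_splits)
  moreover have "i = i' \<or> i = j'" using fun_cong[OF eq, of i] by (auto simp: mpair_def munit_def split: if_splits)
  moreover have "j = i' \<or> j = j'" using fun_cong[OF eq, of j] by (auto simp: mpair_def munit_def split: if_splits)
  moreover have "i = j \<longleftrightarrow> i' = j'" using fun_cong[OF eq, of i] fun_cong[OF eq, of i']
    by (auto simp: mpair_def munit_def split: if_splits)
  ultimately show "(i' = i \<and> j' = j) \<or> (i' = j \<and> j' = i)" by blast
qed (auto simp: mpair_def fun_eq_iff)

lemma pdiff_pdiff_mzero: "pdiff i (pdiff j p) mzero = (if i = j then 2 else 1) * p (mpair i j)"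
proof -
  have "(mzero(i := 1))(j := (mzero(i := 1)) j + 1) = mpair i j"
    by (auto simp: fun_eq_iff mpair_def munit_def)
  then show ?thesis by (simp add: pdiff_pdiff)
qed

definition quad_field :: "nat \<Rightarrow> (nat \<Rightarrow> nat \<Rightarrow> nat \<Rightarrow> real) \<Rightarrow> nat \<Rightarrow> rpoly" where
  "quad_field n H l \<alpha> = (\<Sum>i<n. \<Sum>j<n. if \<alpha> = mpair i j then H l i j / 2 else 0)"

lemma quad_field_nonzero:
  assumes "quad_field n H l \<alpha> \<noteq> 0" shows "\<exists>i<n. \<exists>j<n. \<alpha> = mpair i j"
proof (rule ccontr)
  assume "\<not> (\<exists>i<n. \<exists>j<n. \<alpha> = mpair i j)"
  then have "quad_field n H l \<alpha> = 0" unfolding quad_field_def by (intro sum.neutral ballI) auto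
  then show False using assms by simp
qed

lemma pdiff_pdiff_quad_field:
  assumes "H l i j = H l j i" "i < n" "j < n"
  shows "pdiff i (pdiff j (quad_field n H l)) mzero = H l i j"
proof -
  have "quad_field n H l (mpair i j) = (\<Sum>i'<n. \<Sum>j'<n.
      (if j' = j then if i' = i then H l i j / 2 else 0 else 0)
    + (if j' = i then if i' = j then if i = j then 0 else H l i j / 2 else 0 else 0))"
    unfolding quad_field_def using assms(1) by (intro sum.cong refl) (auto simp: mpair_eq_iff)
  also have "\<dots> = (if i = j then 1 else 2) * (H l i j / 2)"
    using assms(2,3) by (simp add: sum.distrib)
  finally show ?thesis by (cases "i = j") (simp_all add: pdiff_pdiff_mzero)
qed

lemma hess0_sym:
  assumes "\<Gamma> \<in> Fjets n k" shows "hess0 n \<Gamma> a l i j = hess0 n \<Gamma> a l j i"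
proof -
  have sym: "\<Gamma> l' i' j' = \<Gamma> l' j' i'" for l' i' j' using assms by (simp add: Fjets_def)
  have "(\<Sum>m<n. \<Gamma> l m j mzero * a m i) = (\<Sum>m<n. \<Gamma> l j m mzero * a m i)"
    "(\<Sum>m<n. \<Gamma> l i m mzero * a m j) = (\<Sum>m<n. \<Gamma> l m i mzero * a m j)"
    by (simp_all add: sym[of l _ j] sym[of l i])
  then show ?thesis unfolding hess0_def by (simp add: sym[of _ i j])
qed

definition extend_lin :: "nat \<Rightarrow> (nat \<Rightarrow> nat \<Rightarrow> nat \<Rightarrow> rpoly) \<Rightarrow> (nat \<Rightarrow> rpoly) \<Rightarrow> nat \<Rightarrow> rpoly" where
  "extend_lin n \<Gamma> W = (\<lambda>l \<alpha>. W l \<alpha> + quad_field n (hess0 n \<Gamma> (lin_coeffs W)) l \<alpha>)"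

lemma linvfD:
  assumes "W \<in> linvf n"
  shows "W l \<alpha> \<noteq> 0 \<Longrightarrow> \<alpha> \<in> MI n \<and> mdeg n \<alpha> = 1" "n \<le> l \<Longrightarrow> W l = (\<lambda>_. 0)"
  using assms by (auto simp: linvf_def)

lemma lin_coeffs_extend_lin: "extend_lin n \<Gamma> W p (munit q) = W p (munit q)"
proof -
  have "quad_field n (hess0 n \<Gamma> (lin_coeffs W)) p (munit q) = 0"
    using quad_field_nonzero mpair_neq(2) by metis
  then show ?thesis by (simp add: extend_lin_def)
qed

lemma extend_lin_kalg:
  assumes \<Gamma>: "\<Gamma> \<in> Fjets n k" and W: "W \<in> linvf n"
  shows "extend_lin n \<Gamma> W \<in> kalg n 0"
proof -
  have "\<alpha> \<in> mis n 2" if nz: "extend_lin n \<Gamma> W l \<alpha> \<noteq> 0" for l \<alpha>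
  proof (cases "W l \<alpha> = 0")
    case True
    then obtain i j where "i < n" "j < n" "\<alpha> = mpair i j"
      using nz quad_field_nonzero[of n "hess0 n \<Gamma> (lin_coeffs W)" l \<alpha>] True
      by (auto simp: extend_lin_def)
    then show ?thesis by (simp add: mis_def mpair_MI mdeg_mpair)
  next
    case False
    then show ?thesis using linvfD(1)[OF W] by (simp add: mis_def)
  qed
  then have "extend_lin n \<Gamma> W l \<in> polys n 2" for l by (simp add: polys_def)
  moreover have "extend_lin n \<Gamma> W l mzero = 0" for l
    using linvfD(1)[OF W, of l mzero] quad_field_nonzero[of n _ l mzero] mpair_neq(1)
    by (fastforce simp: extend_lin_def)
  moreover have "extend_lin n \<Gamma> W l = (\<lambda>_. 0)" if "n \<le> l" for l
  proof -
    have "\<Gamma> l i j = (\<lambda>_. 0)" for i j using \<Gamma> that by (simp add: Fjets_def)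
    then show ?thesis
      using linvfD(2)[OF W that]
      by (intro ext) (simp add: extend_lin_def quad_field_def hess0_def cong: if_cong)
  qed
  ultimately show ?thesis by (simp add: kalg_def numeral_2_eq_2)
qed

lemma extend_lin_stab:
  assumes \<Gamma>: "\<Gamma> \<in> Fjets n 0" and W: "W \<in> linvf n"
  shows "extend_lin n \<Gamma> W \<in> stab n 0 \<Gamma>"
proof -
  let ?V = "extend_lin n \<Gamma> W"
  note kf = kalgD[OF extend_lin_kalg[OF \<Gamma> W]]
  have "poly_in_vars n (\<Gamma> l i j)" for l i j
    using \<Gamma> by (intro polys_in_vars) (auto simp: Fjets_def)
  have "lie n ?V \<Gamma> l i j \<alpha> = 0" if "l < n" "i < n" "j < n" "mdeg n \<alpha> = 0" for l i j \<alpha>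
  proof (cases "\<alpha> \<in> MI n")
    case False
    show ?thesis
      by (rule lie_outside_MI) (use kf(1) \<open>\<And>l i j. poly_in_vars n (\<Gamma> l i j)\<close> that False in auto)
  next
    case True
    then have "\<alpha> = mzero" using MI_mdeg_eq_0 that(4) by simp
    moreover have "W l (mpair i j) = 0"
      using linvfD(1)[OF W, of l "mpair i j"] mdeg_mpair that(2,3) by auto
    then have "pdiff i (pdiff j (?V l)) mzero = hess0 n \<Gamma> (lin_coeffs W) l i j"
      using pdiff_pdiff_quad_field[of "hess0 n \<Gamma> (lin_coeffs W)" l i j n, OF hess0_sym[OF \<Gamma>] that(2,3)]
      by (simp add: extend_lin_def pdiff_pdiff_mzero algebra_simps)
    ultimately show ?thesis
      using lie_mzero[of ?V n \<Gamma> l i j] kf(3) by (simp add: lin_coeffs_extend_lin hess0_def)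
  qed
  then show ?thesis
    using extend_lin_kalg[OF \<Gamma> W] by (simp add: stab_def trunc_def fun_eq_iff)
qed

lemma hcomp_extend_lin:
  assumes "W \<in> linvf n"
  shows "(\<lambda>l. hcomp n 1 (extend_lin n \<Gamma> W l)) = W"
proof (intro ext)
  fix l \<alpha>
  have "quad_field n (hess0 n \<Gamma> (lin_coeffs W)) l \<alpha> = 0" if "mdeg n \<alpha> = 1"
  proof (rule ccontr)
    assume "quad_field n (hess0 n \<Gamma> (lin_coeffs W)) l \<alpha> \<noteq> 0"
    then obtain i j where "i < n" "j < n" "\<alpha> = mpair i j" using quad_field_nonzero by blast
    then show False using that mdeg_mpair by simp
  qed
  then show "hcomp n 1 (extend_lin n \<Gamma> W l) \<alpha> = W l \<alpha>"
    using linvfD(1)[OF assms, of l \<alpha>] by (auto simp: hcomp_def extend_lin_def)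
qed

lemma hcomp_stab_linvf:
  assumes "V \<in> stab n k \<Gamma>" shows "(\<lambda>l. hcomp n 1 (V l)) \<in> linvf n"
  using kalgD(2,4)[OF stab_kalg[OF assms]] by (auto simp: linvf_def hcomp_def split: if_splits)

lemma bij_hcomp_stab0:
  assumes "\<Gamma> \<in> Fjets n 0"
  shows "bij_betw (\<lambda>V l. hcomp n 1 (V l)) (stab n 0 \<Gamma>) (linvf n)"
  unfolding bij_betw_def
proof
  show "inj_on (\<lambda>V l. hcomp n 1 (V l)) (stab n 0 \<Gamma>)"
  proof (rule inj_onI)
    fix V W assume "V \<in> stab n 0 \<Gamma>" "W \<in> stab n 0 \<Gamma>"
      and eq: "(\<lambda>l. hcomp n 1 (V l)) = (\<lambda>l. hcomp n 1 (W l))"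
    have "V p (munit q) = W p (munit q)" if "q < n" for p q
      using fun_cong[OF fun_cong[OF eq, of p], of "munit q"] that by (simp add: hcomp_def)
    then show "V = W" using stab_eq_if_lin_coeffs_eq \<open>V \<in> stab n 0 \<Gamma>\<close> \<open>W \<in> stab n 0 \<Gamma>\<close> by blast
  qed
  have "W \<in> (\<lambda>V l. hcomp n 1 (V l)) ` stab n 0 \<Gamma>" if "W \<in> linvf n" for W
    using hcomp_extend_lin[OF that, of \<Gamma>] extend_lin_stab[OF assms that] by (rule image_eqI[OF sym])
  then show "(\<lambda>V l. hcomp n 1 (V l)) ` stab n 0 \<Gamma> = linvf n"
    using hcomp_stab_linvf by blast
qed

interpretation vf: vector_space vscale
  by unfold_locales (simp_all add: vscale_def fun_eq_iff algebra_simps)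

lemma subspace_stab: "vf.subspace (stab n k \<Gamma>)"
  unfolding vf.subspace_def
proof (intro conjI ballI allI)
  show "0 \<in> stab n k \<Gamma>" using zero_in_stab by (simp add: zero_fun_def)
  show "x + y \<in> stab n k \<Gamma>" if "x \<in> stab n k \<Gamma>" "y \<in> stab n k \<Gamma>" for x y
    using stab_lincomb[OF that, of 1 1] by (simp add: plus_fun_def)
  show "vscale c x \<in> stab n k \<Gamma>" if "x \<in> stab n k \<Gamma>" for c x
    using stab_lincomb[OF that that, of c 0] by (simp add: vscale_def)
qed

lemma sum_vscale_apply: "(\<Sum>x\<in>A. vscale (f x) (F x)) l \<alpha> = (\<Sum>x\<in>A. f x * F x l \<alpha>)"
  by (induction A rule: infinite_finite_induct) (simp_all add: vscale_def)

definition lin_unit :: "nat \<Rightarrow> nat \<Rightarrow> nat \<Rightarrow> rpoly" where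
  "lin_unit p q = (\<lambda>l \<alpha>. if l = p \<and> \<alpha> = munit q then 1 else 0)"

definition stab0_basis :: "nat \<Rightarrow> (nat \<Rightarrow> nat \<Rightarrow> nat \<Rightarrow> rpoly) \<Rightarrow> nat \<times> nat \<Rightarrow> nat \<Rightarrow> rpoly" where
  "stab0_basis n \<Gamma> = (\<lambda>(p, q). extend_lin n \<Gamma> (lin_unit p q))"

lemma lin_coeffs_stab0_basis: "stab0_basis n \<Gamma> x p (munit q) = (if x = (p, q) then 1 else 0)"
  by (auto simp: stab0_basis_def lin_coeffs_extend_lin lin_unit_def split: prod.splits)

lemma inj_on_stab0_basis: "inj_on (stab0_basis n \<Gamma>) A"
  by (rule inj_onI) (metis lin_coeffs_stab0_basis one_neq_zero prod.collapse)

lemma stab0_basis_stab: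
  assumes "\<Gamma> \<in> Fjets n 0" "x \<in> {..<n} \<times> {..<n}"
  shows "stab0_basis n \<Gamma> x \<in> stab n 0 \<Gamma>"
  using assms extend_lin_stab[OF assms(1)] by (auto simp: stab0_basis_def linvf_def lin_unit_def)

lemma stab0_eq_sum_basis:
  assumes \<Gamma>: "\<Gamma> \<in> Fjets n 0" and V: "V \<in> stab n 0 \<Gamma>"
  shows "V = (\<Sum>x\<in>{..<n} \<times> {..<n}. vscale (V (fst x) (munit (snd x))) (stab0_basis n \<Gamma> x))"
    (is "V = ?T")
proof (rule stab_eq_if_lin_coeffs_eq[OF V])
  show "?T \<in> stab n 0 \<Gamma>"
    using stab0_basis_stab[OF \<Gamma>] by (intro vf.subspace_sum[OF subspace_stab] vf.subspace_scale[OF subspace_stab])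
  show "\<forall>p<n. \<forall>q<n. V p (munit q) = ?T p (munit q)"
    by (simp add: sum_vscale_apply lin_coeffs_stab0_basis if_distrib[of "(*) _"] cong: if_cong)
qed

lemma independent_stab0_basis: "vf.independent (stab0_basis n \<Gamma> ` ({..<n} \<times> {..<n}))"
proof (rule vf.independent_if_scalars_zero)
  fix c v assume zero: "(\<Sum>v\<in>stab0_basis n \<Gamma> ` ({..<n} \<times> {..<n}). vscale (c v) v) = 0"
    and "v \<in> stab0_basis n \<Gamma> ` ({..<n} \<times> {..<n})"
  then obtain p q where pq: "p < n" "q < n" "v = stab0_basis n \<Gamma> (p, q)" by auto
  have "0 = (\<Sum>x\<in>{..<n} \<times> {..<n}. vscale (c (stab0_basis n \<Gamma> x)) (stab0_basis n \<Gamma> x)) p (munit q)"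
    using zero by (simp add: sum.reindex[OF inj_on_stab0_basis])
  also have "\<dots> = c v"
    using pq by (simp add: sum_vscale_apply lin_coeffs_stab0_basis if_distrib[of "(*) _"] cong: if_cong)
  finally show "c v = 0" by simp
qed simp

lemma dim_stab0:
  assumes \<Gamma>: "\<Gamma> \<in> Fjets n 0"
  shows "vf.dim (stab n 0 \<Gamma>) = n ^ 2"
proof (rule vf.dim_unique[OF _ _ independent_stab0_basis])
  show "stab0_basis n \<Gamma> ` ({..<n} \<times> {..<n}) \<subseteq> stab n 0 \<Gamma>"
    using stab0_basis_stab[OF \<Gamma>] by blast
  show "stab n 0 \<Gamma> \<subseteq> vf.span (stab0_basis n \<Gamma> ` ({..<n} \<times> {..<n}))"
  proof
    fix V assume "V \<in> stab n 0 \<Gamma>"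
    then have "V = (\<Sum>x\<in>{..<n} \<times> {..<n}. vscale (V (fst x) (munit (snd x))) (stab0_basis n \<Gamma> x))"
      by (rule stab0_eq_sum_basis[OF \<Gamma>])
    also have "\<dots> \<in> vf.span (stab0_basis n \<Gamma> ` ({..<n} \<times> {..<n}))"
      by (intro vf.span_sum vf.span_scale vf.span_base imageI)
    finally show "V \<in> vf.span (stab0_basis n \<Gamma> ` ({..<n} \<times> {..<n}))" .
  qed
  show "card (stab0_basis n \<Gamma> ` ({..<n} \<times> {..<n})) = n ^ 2"
    using card_image[OF inj_on_stab0_basis] by (simp add: power2_eq_square)
qed

theorem mainTheorem4:
  fixes n :: nat
  assumes "n \<ge> 3"
  shows "(\<forall>\<Gamma>\<in>Fjets n 0.
            bij_betw (\<lambda>V l. hcomp n 1 (V l)) (stab n 0 \<Gamma>) (linvf n)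
          \<and> vector_space.dim vscale (stab n 0 \<Gamma>) = n ^ 2)
       \<and> (\<forall>k\<ge>1. \<exists>U. open_in_F n k U \<and> dense_in_F n k U
            \<and> (\<forall>\<Gamma>\<in>U. stab n k \<Gamma> = {(\<lambda>_ _. 0)}))"
  using bij_hcomp_stab0 dim_stab0 open_regular_jets dense_regular_jets[OF assms] stab_regular_jets
  by blast

end
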